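(* Let $S\subset\mathbb{Z}^d$ be a finite set (not necessarily symmetric), $\mathcal{P}=\{P_\alpha\}_{\alpha\in S}$ a resolution of unity on $\mathbb{C}^D$, $C$ a $D\times D$ unitary matrix with $C^2=I$ that is not a scalar multiple of the identity, $\mathcal{S}=\sum_{\alpha\in S}\tau^\alpha P_\alpha$, and $U_C=\mathcal{S}^*C\mathcal{S}C$ on $\ell^2(\mathbb{Z}^d,\mathbb{C}^D)$. If $\dim\mathcal{E}(1)<\dim\mathcal{E}(-1)$, then $U_C$ has eigenvalue $1$; consequently there exist a nonzero $\phi\in\mathbb{C}^D$ and $x_o\in\mathbb{Z}^d$ with $\limsup_{n\to\infty}\|U_C^n(\delta_0\otimes\phi)(x_o)\|^2>0$.
   Context: A resolution of unity: orthogonal projections $P_\alpha$ on $\mathbb{C}^D$, $P_\alpha P_\beta=0$ ($\alpha\neq\beta$), $\sum_\alpha P_\alpha=I$. $(\tau^\alpha f)(x)=f(x-\alpha)$; $C$ acts pointwise on $\ell^2(\mathbb{Z}^d,\mathbb{C}^D)$. $\mathcal{E}(\pm1)$ are the eigenspaces of $C$ for $\pm1$. $\delta_0\otimes\phi$ equals $\phi$ at $0$ and $0$ elsewhere. Eigenvalue means point spectrum. *)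

theory Defs
  imports "HOL-Analysis.Analysis"
begin

text \<open>Sites are points of the lattice Z^d, modelled as int^'d (d = CARD('d));
  internal states live in C^D, modelled as complex^'n (D = CARD('n)).\<close>

definition cadj :: "complex^'n^'m \<Rightarrow> complex^'m^'n" where
  "cadj A = (\<chi> i j. cnj (A $ j $ i))"

definition unitary_mat :: "complex^'n^'n \<Rightarrow> bool" where
  "unitary_mat C \<longleftrightarrow> cadj C ** C = mat 1 \<and> C ** cadj C = mat 1"

definition orth_proj :: "complex^'n^'n \<Rightarrow> bool" where
  "orth_proj P \<longleftrightarrow> P ** P = P \<and> cadj P = P"

definition resolution_of_unity :: "'i set \<Rightarrow> ('i \<Rightarrow> complex^'n^'n) \<Rightarrow> bool" where
  "resolution_of_unity S P \<longleftrightarrow>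
     (\<forall>a\<in>S. orth_proj (P a)) \<and>
     (\<forall>a\<in>S. \<forall>b\<in>S. a \<noteq> b \<longrightarrow> P a ** P b = 0) \<and>
     (\<Sum>a\<in>S. P a) = mat 1"

definition ell2 :: "(int^'d \<Rightarrow> complex^'n) \<Rightarrow> bool" where
  "ell2 f \<longleftrightarrow> (\<lambda>x. (norm (f x))\<^sup>2) summable_on UNIV"

definition transl :: "int^'d \<Rightarrow> (int^'d \<Rightarrow> 'b) \<Rightarrow> (int^'d \<Rightarrow> 'b)" where
  "transl a f = (\<lambda>x. f (x - a))"

definition ptw :: "complex^'n^'n \<Rightarrow> ('x \<Rightarrow> complex^'n) \<Rightarrow> ('x \<Rightarrow> complex^'n)" where
  "ptw A f = (\<lambda>x. A *v f x)"

definition shift_op :: "(int^'d) set \<Rightarrow> (int^'d \<Rightarrow> complex^'n^'n)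
    \<Rightarrow> (int^'d \<Rightarrow> complex^'n) \<Rightarrow> (int^'d \<Rightarrow> complex^'n)" where
  "shift_op S P f = (\<lambda>x. \<Sum>a\<in>S. transl a (ptw (P a) f) x)"

text \<open>Its Hilbert-space adjoint S^* = sum_a P_a^* (tau^a)^* = sum_a P_a tau^(-a)
  (written out using cadj of P_a; tau^a is unitary with inverse tau^(-a)).\<close>
definition shift_adj :: "(int^'d) set \<Rightarrow> (int^'d \<Rightarrow> complex^'n^'n)
    \<Rightarrow> (int^'d \<Rightarrow> complex^'n) \<Rightarrow> (int^'d \<Rightarrow> complex^'n)" where
  "shift_adj S P f = (\<lambda>x. \<Sum>a\<in>S. ptw (cadj (P a)) (transl (- a) f) x)"

definition U_op :: "(int^'d) set \<Rightarrow> (int^'d \<Rightarrow> complex^'n^'n) \<Rightarrow> complex^'n^'n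
    \<Rightarrow> (int^'d \<Rightarrow> complex^'n) \<Rightarrow> (int^'d \<Rightarrow> complex^'n)" where
  "U_op S P C = shift_adj S P \<circ> ptw C \<circ> shift_op S P \<circ> ptw C"

definition eigsp :: "complex^'n^'n \<Rightarrow> complex \<Rightarrow> (complex^'n) set" where
  "eigsp C c = {v. C *v v = c *s v}"

definition has_eigenvalue_l2 :: "((int^'d \<Rightarrow> complex^'n) \<Rightarrow> (int^'d \<Rightarrow> complex^'n)) \<Rightarrow> complex \<Rightarrow> bool" where
  "has_eigenvalue_l2 U c \<longleftrightarrow> (\<exists>f. ell2 f \<and> f \<noteq> (\<lambda>_. 0) \<and> U f = (\<lambda>x. c *s f x))"

definition delta_tensor :: "'b \<Rightarrow> (int^'d \<Rightarrow> 'b::zero)" where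
  "delta_tensor \<phi> = (\<lambda>x. if x = 0 then \<phi> else 0)"

end

theory Submission
  imports Defs "HOL-Library.Function_Algebras"
begin

text \<open>On a box B of side N, the functions supported in B with values in \<open>\<E>(-1)\<close> form a space
  of dimension \<open>N^d dim \<E>(-1)\<close>, and \<open>(I + C)\<S>\<close> maps it into the functions supported in the
  R-neighbourhood of B with values in \<open>\<E>(1)\<close> (as \<open>C\<^sup>2 = I\<close>), a space of dimension
  \<open>(N + 2R)^d dim \<E>(1)\<close>. For N large the first dimension is bigger, so some nonzero finitely
  supported f satisfies \<open>Cf = -f\<close> and \<open>C\<S>f = -\<S>f\<close>; since \<open>\<S>\<^sup>*\<S> = I\<close> this gives \<open>U\<^sub>C f = f\<close>.
  Expanding f in translates of the \<open>\<delta>\<^sub>0 \<otimes> e\<^sub>i\<close> and using that \<open>U\<^sub>C\<close> commutes with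
  translations, \<open>f(x\<^sub>0)\<close> is for every n the same fixed combination of the finitely many values
  \<open>U\<^sub>C\<^sup>n(\<delta>\<^sub>0 \<otimes> e\<^sub>i)(x\<^sub>0 - y)\<close>, so one of them is bounded away from 0 for infinitely many n.\<close>

lemma linear_nonzero_kernel_if_card_less:
  fixes s :: "'a::field \<Rightarrow> 'b::ab_group_add \<Rightarrow> 'b"
  assumes "vector_space s" and lin: "Vector_Spaces.linear s s L"
    and indep: "module.independent s X" and "finite X" "finite Y"
    and image: "L ` X \<subseteq> module.span s Y" and less: "card Y < card X"
  shows "\<exists>v\<in>module.span s X. v \<noteq> 0 \<and> L v = 0"
proof (rule ccontr)
  interpret vector_space_pair s s
    using \<open>vector_space s\<close> by (simp add: vector_space_pair_def)
  assume "\<not> ?thesis"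
  then have inj: "inj_on L (vs1.span X)"
    using linear_inj_on_iff_eq_0[OF lin vs1.subspace_span] by blast
  then have "vs1.independent (L ` X)"
    using linear_independent_injective_image[OF lin indep] by blast
  moreover have "card (L ` X) = card X"
    using inj vs1.span_superset by (meson card_image inj_on_subset)
  ultimately show False
    using vs1.independent_span_bound[OF \<open>finite Y\<close> _ image] less by auto
qed

lemma sum_fun_apply: "(\<Sum>j\<in>J. (h j :: 'x \<Rightarrow> 'b::comm_monoid_add)) x = (\<Sum>j\<in>J. h j x)"
  by (induction J rule: infinite_finite_induct) auto

text \<open>HOL has no class of complex vector spaces, so the complex structure on
  \<open>\<C>\<^sup>D\<close>-valued functions is given by an explicit scalar multiplication.\<close>

definition scale_fun :: "complex \<Rightarrow> ('x \<Rightarrow> complex^'n) \<Rightarrow> ('x \<Rightarrow> complex^'n)" where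
  "scale_fun c g = (\<lambda>x. c *s g x)"

lemma scale_fun_apply [simp]: "scale_fun c g x = c *s g x"
  by (simp add: scale_fun_def)

lemma vector_space_scale_fun: "vector_space (scale_fun :: complex \<Rightarrow> ('x \<Rightarrow> complex^'n) \<Rightarrow> _)"
  by unfold_locales (auto simp: fun_eq_iff vec_eq_iff algebra_simps)

interpretation fun_vs: vector_space "scale_fun :: complex \<Rightarrow> ('x \<Rightarrow> complex^'n) \<Rightarrow> _"
  by (rule vector_space_scale_fun)

interpretation fun_vs_pair: vector_space_pair
    "scale_fun :: complex \<Rightarrow> ('x \<Rightarrow> complex^'n) \<Rightarrow> _" "scale_fun :: complex \<Rightarrow> ('y \<Rightarrow> complex^'m) \<Rightarrow> _"
  by (intro vector_space_pair.intro vector_space_scale_fun)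

lemma linear_funpow:
  assumes "Vector_Spaces.linear s s f"
  shows "Vector_Spaces.linear s s (f ^^ n)"
proof (induction n)
  case 0
  have "vector_space s"
    using assms by (simp add: Vector_Spaces.linear_iff)
  then show ?case
    by (simp add: vector_space.linear_ident)
next
  case (Suc n)
  then show ?case
    unfolding funpow.simps(2) by (rule Vector_Spaces.linear_compose[OF _ assms])
qed

lemmas matrix_vector_mult_scale = vec.linear_scale[OF matrix_vector_mul_linear_gen]

lemma linear_ptw: "Vector_Spaces.linear scale_fun scale_fun (ptw A)"
  unfolding Vector_Spaces.linear_iff
  by (simp add: vector_space_scale_fun ptw_def fun_eq_iff matrix_vector_right_distrib
      matrix_vector_mult_scale)

lemma linear_shift_op: "Vector_Spaces.linear scale_fun scale_fun (shift_op S P)"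
  unfolding Vector_Spaces.linear_iff
  by (simp add: vector_space_scale_fun shift_op_def transl_def ptw_def fun_eq_iff
      matrix_vector_right_distrib matrix_vector_mult_scale sum.distrib vec.scale_sum_right)

lemma linear_shift_adj: "Vector_Spaces.linear scale_fun scale_fun (shift_adj S P)"
  unfolding Vector_Spaces.linear_iff
  by (simp add: vector_space_scale_fun shift_adj_def transl_def ptw_def fun_eq_iff
      matrix_vector_right_distrib matrix_vector_mult_scale sum.distrib vec.scale_sum_right)

lemma linear_U_op: "Vector_Spaces.linear scale_fun scale_fun (U_op S P C)"
  using Vector_Spaces.linear_compose[OF Vector_Spaces.linear_compose[OF
        Vector_Spaces.linear_compose[OF linear_ptw linear_shift_op] linear_ptw] linear_shift_adj]
  by (simp add: U_op_def comp_assoc)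

lemma transl_ptw: "transl b (ptw A g) = ptw A (transl b g)"
  by (simp add: transl_def ptw_def)

lemma transl_shift_op: "transl b (shift_op S P g) = shift_op S P (transl b g)"
  by (simp add: transl_def shift_op_def ptw_def fun_eq_iff algebra_simps)

lemma transl_shift_adj: "transl b (shift_adj S P g) = shift_adj S P (transl b g)"
  by (simp add: transl_def shift_adj_def ptw_def fun_eq_iff algebra_simps)

lemma transl_U_op: "transl b (U_op S P C g) = U_op S P C (transl b g)"
  by (simp add: U_op_def transl_ptw transl_shift_op transl_shift_adj)

lemma mat_sum_vector_mult: "finite S \<Longrightarrow> (\<Sum>a\<in>S. A a) *v (v::complex^'n) = (\<Sum>a\<in>S. A a *v v)"
  by (induction S rule: finite_induct) (simp_all add: matrix_vector_mult_add_rdistrib)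

lemma shift_adj_shift_op:
  assumes "finite S" and R: "resolution_of_unity S P"
  shows "shift_adj S P (shift_op S P g) = g"
proof
  fix x
  have proj: "cadj (P a) = P a" "P a ** P a = P a" if "a \<in> S" for a
    using R that by (auto simp: resolution_of_unity_def orth_proj_def)
  have orth: "P a ** P b = 0" if "a \<in> S" "b \<in> S" "a \<noteq> b" for a b
    using R that by (auto simp: resolution_of_unity_def)
  have diagonal: "(\<Sum>b\<in>S. P a *v (P b *v g (x + a - b))) = P a *v g x" if "a \<in> S" for a
  proof -
    have "(\<Sum>b\<in>S. P a *v (P b *v g (x + a - b))) = (\<Sum>b\<in>S. if b = a then P a *v g x else 0)"
      using orth proj that by (intro sum.cong refl) (auto simp: matrix_vector_mul_assoc)
    then show ?thesis
      using \<open>finite S\<close> that by simp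
  qed
  have "shift_adj S P (shift_op S P g) x = (\<Sum>a\<in>S. P a *v (\<Sum>b\<in>S. P b *v g (x + a - b)))"
    unfolding shift_adj_def shift_op_def ptw_def transl_def
    using proj by (intro sum.cong) (auto simp: algebra_simps)
  also have "\<dots> = (\<Sum>a\<in>S. P a *v g x)"
    by (intro sum.cong refl) (simp add: vec.linear_sum[OF matrix_vector_mul_linear_gen] diagonal)
  also have "\<dots> = g x"
    using R \<open>finite S\<close> by (simp add: mat_sum_vector_mult[symmetric] resolution_of_unity_def)
  finally show "shift_adj S P (shift_op S P g) x = g x" .
qed

lemma U_op_fixes_antiinvariant:
  assumes "finite S" and "resolution_of_unity S P"
    and "\<And>x. C *v f x = - f x" and "\<And>x. C *v shift_op S P f x = - shift_op S P f x"
  shows "U_op S P C f = f"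
proof -
  have "ptw C f = - f"
    using assms(3) by (simp add: ptw_def fun_eq_iff)
  moreover have "ptw C (shift_op S P (- f)) = shift_op S P f"
    using assms(4) by (simp add: shift_op_def transl_def ptw_def fun_eq_iff sum_negf
        vec.linear_neg[OF matrix_vector_mul_linear_gen])
  ultimately show ?thesis
    using shift_adj_shift_op[OF assms(1,2)] by (simp add: U_op_def)
qed

definition int_box :: "int \<Rightarrow> int \<Rightarrow> (int^'d) set" where
  "int_box lo hi = {x. \<forall>i. lo \<le> x$i \<and> x$i < hi}"

lemma int_box_eq_image: "int_box lo hi = vec_lambda ` (PiE UNIV (\<lambda>_. {lo..<hi}))"
proof (rule set_eqI, rule iffI)
  fix x :: "int^'d"
  assume "x \<in> int_box lo hi"
  then show "x \<in> vec_lambda ` (PiE UNIV (\<lambda>_. {lo..<hi}))"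
    by (intro image_eqI[of _ _ "vec_nth x"]) (auto simp: int_box_def)
qed (auto simp: int_box_def)

lemma finite_int_box: "finite (int_box lo hi)"
  unfolding int_box_eq_image by (simp add: finite_PiE)

lemma card_int_box: "card (int_box lo hi :: (int^'d) set) = nat (hi - lo) ^ CARD('d)"
proof -
  have "inj_on (vec_lambda :: ('d \<Rightarrow> int) \<Rightarrow> _) X" for X
    by (intro inj_onI) (metis vec_lambda_inverse UNIV_I)
  then show ?thesis
    unfolding int_box_eq_image by (simp add: card_image card_PiE)
qed

lemma add_mem_int_box:
  assumes "x \<in> int_box 0 hi" and "\<And>i. \<bar>a$i\<bar> \<le> R"
  shows "x + a \<in> int_box (- R) (hi + R)"
proof -
  have "- R \<le> x$i + a$i \<and> x$i + a$i < hi + R" for i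
  proof -
    have "0 \<le> x$i" "x$i < hi"
      using assms(1) by (auto simp: int_box_def)
    with assms(2)[of i] show ?thesis
      by linarith
  qed
  then show ?thesis
    by (simp add: int_box_def)
qed

lemma finite_int_vec_set_bounded:
  fixes S :: "(int^'d) set"
  assumes "finite S"
  obtains R :: int where "R \<ge> 0" and "\<And>a i. a \<in> S \<Longrightarrow> \<bar>a$i\<bar> \<le> R"
proof
  define R where "R = (\<Sum>a\<in>S. \<Sum>i\<in>UNIV. \<bar>a$i\<bar>)"
  show "R \<ge> 0"
    unfolding R_def by (intro sum_nonneg) auto
  fix a i
  assume "a \<in> S"
  have "\<bar>a$i\<bar> \<le> (\<Sum>i\<in>UNIV. \<bar>a$i\<bar>)"
    by (rule member_le_sum) auto
  also have "\<dots> \<le> R"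
    unfolding R_def using assms \<open>a \<in> S\<close> by (intro member_le_sum) auto
  finally show "\<bar>a$i\<bar> \<le> R" .
qed

lemma ex_pow_add_mult_less:
  fixes c d k m :: nat
  assumes "m < k"
  shows "\<exists>N. (N + c) ^ d * m < N ^ d * k"
proof -
  have "(\<lambda>N::nat. (1 + real c / real N) ^ d * real m) \<longlonglongrightarrow> (1 + 0) ^ d * real m"
    by (intro tendsto_intros lim_const_over_n)
  then have "\<forall>\<^sub>F N in sequentially. (1 + real c / real N) ^ d * real m < real k"
    using assms by (intro order_tendstoD) auto
  moreover have "\<forall>\<^sub>F N in sequentially. N > (0::nat)"
    by (rule eventually_gt_at_top)
  ultimately have "\<forall>\<^sub>F N in sequentially. (1 + real c / real N) ^ d * real m < real k \<and> N > 0"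
    by (rule eventually_conj)
  then obtain N :: nat where "(1 + real c / real N) ^ d * real m < real k" and "N > 0"
    using eventually_happens'[OF sequentially_bot] by blast
  then have "((real N + real c) / real N) ^ d * real m < real k"
    by (simp add: field_simps)
  then have "real ((N + c) ^ d * m) < real (N ^ d * k)"
    using \<open>N > 0\<close> by (simp add: power_divide field_simps)
  then show ?thesis
    by (intro exI[of _ N]) (simp only: of_nat_less_iff)
qed


definition delta_at :: "'x \<Rightarrow> 'b \<Rightarrow> ('x \<Rightarrow> 'b::zero)" where
  "delta_at y e = (\<lambda>x. if x = y then e else 0)"

definition delta_family :: "'x set \<Rightarrow> (complex^'n) set \<Rightarrow> ('x \<Rightarrow> complex^'n) set" where
  "delta_family B E = (\<lambda>(y, e). delta_at y e) ` (B \<times> E)"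

lemma transl_delta_tensor: "transl y (delta_tensor e) = delta_at y e"
  by (auto simp: transl_def delta_tensor_def delta_at_def)

lemma delta_at_add: "delta_at y ((u::'b::monoid_add) + v) = delta_at y u + delta_at y v"
  by (simp add: delta_at_def fun_eq_iff)

lemma linear_delta_at: "Vector_Spaces.linear (*s) scale_fun (delta_at y :: complex^'n \<Rightarrow> 'x \<Rightarrow> _)"
  unfolding Vector_Spaces.linear_iff
  by (auto simp: vector_space_scale_fun vec.vector_space_axioms delta_at_def fun_eq_iff)

lemma ptw_delta_at: "ptw A (delta_at y e) = delta_at y (A *v e)"
  by (auto simp: ptw_def delta_at_def fun_eq_iff)

lemma shift_op_delta_at: "shift_op S P (delta_at y e) = (\<Sum>a\<in>S. delta_at (y + a) (P a *v e))"
  by (auto simp: shift_op_def transl_def ptw_def delta_at_def sum_fun_apply fun_eq_iff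
      algebra_simps intro!: sum.cong)

lemma inj_on_delta_at: "0 \<notin> E \<Longrightarrow> inj_on (\<lambda>(y, e). delta_at y e) (B \<times> E)"
  by (intro inj_onI) (auto simp: delta_at_def fun_eq_iff split: if_splits)

lemma finite_delta_family: "finite B \<Longrightarrow> finite E \<Longrightarrow> finite (delta_family B E)"
  by (simp add: delta_family_def)

lemma independent_delta_family:
  assumes "finite B" and indep: "vec.independent E"
  shows "fun_vs.independent (delta_family B E)"
proof (rule fun_vs.independent_if_scalars_zero)
  have "finite E"
    using indep by (rule vec.finiteI_independent)
  then show "finite (delta_family B E)"
    by (rule finite_delta_family[OF \<open>finite B\<close>])
next
  fix u g
  assume sum0: "(\<Sum>h\<in>delta_family B E. scale_fun (u h) h) = 0" and "g \<in> delta_family B E"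
  then obtain y0 e0 where "y0 \<in> B" "e0 \<in> E" and g: "g = delta_at y0 e0"
    by (auto simp: delta_family_def)
  have inj: "inj_on (\<lambda>(y, e). delta_at y e) (B \<times> E)"
    using indep vec.dependent_zero by (intro inj_on_delta_at) blast
  have "0 = (\<Sum>h\<in>delta_family B E. scale_fun (u h) h) y0"
    using sum0 by simp
  also have "\<dots> = (\<Sum>(y, e)\<in>B \<times> E. u (delta_at y e) *s delta_at y e y0)"
    unfolding delta_family_def sum_fun_apply
    by (subst sum.reindex[OF inj]) (auto intro!: sum.cong)
  also have "\<dots> = (\<Sum>y\<in>B. if y = y0 then (\<Sum>e\<in>E. u (delta_at y0 e) *s e) else 0)"
    unfolding sum.cartesian_product[symmetric] by (intro sum.cong refl) (auto simp: delta_at_def)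
  also have "\<dots> = (\<Sum>e\<in>E. u (delta_at y0 e) *s e)"
    using \<open>finite B\<close> \<open>y0 \<in> B\<close> by simp
  finally have "(\<Sum>e\<in>E. u (delta_at y0 e) *s e) = 0" ..
  then have "u (delta_at y0 e0) = 0"
    using indep \<open>e0 \<in> E\<close> vec.dependent_finite[OF vec.finiteI_independent[OF indep]]
    by auto
  then show "u g = 0"
    using g by simp
qed

lemma delta_at_in_span_delta_family:
  assumes "y \<in> B" and "e \<in> vec.span E"
  shows "delta_at y e \<in> fun_vs.span (delta_family B E)"
proof -
  have "delta_at y e \<in> delta_at y ` vec.span E"
    using assms(2) by (rule imageI)
  also have "\<dots> = fun_vs.span (delta_at y ` E)"
    by (rule module_hom.span_image[OF linear_delta_at[unfolded linear_iff_module_hom], symmetric])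
  also have "\<dots> \<subseteq> fun_vs.span (delta_family B E)"
    using assms(1) by (intro fun_vs.span_mono) (force simp: delta_family_def)
  finally show ?thesis .
qed

lemma span_delta_family_supported:
  assumes "vec.subspace V" and "E \<subseteq> V" and "g \<in> fun_vs.span (delta_family B E)"
  shows "g x \<in> V \<and> (x \<notin> B \<longrightarrow> g x = 0)"
  using assms(3)
proof (induction rule: fun_vs.span_induct)
  case base
  show ?case
    unfolding fun_vs.subspace_def
    by (simp add: vec.subspace_0 vec.subspace_add vec.subspace_scale assms(1))
next
  case (step g)
  then obtain y e where "e \<in> E" and "g = delta_at y e" and "y \<in> B"
    by (auto simp: delta_family_def)
  then show ?case
    using assms(2) vec.subspace_0[OF assms(1)] by (auto simp: delta_at_def)
qed


lemma subspace_eigsp: "vec.subspace (eigsp C c)"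
  by (simp add: vec.subspace_def eigsp_def matrix_vector_right_distrib matrix_vector_mult_scale
      algebra_simps)

lemma add_mult_mem_eigsp_1:
  assumes "C ** C = mat 1"
  shows "w + C *v w \<in> eigsp C 1"
  using assms by (simp add: eigsp_def matrix_vector_right_distrib matrix_vector_mul_assoc)

lemma antiinvariant_supported_in:
  fixes B B' :: "(int^'d) set" and P :: "int^'d \<Rightarrow> complex^'n^'n"
  assumes "finite B" and "finite B'" and C2: "C ** C = mat 1"
    and B_B': "\<And>x a. x \<in> B \<Longrightarrow> a \<in> S \<Longrightarrow> x + a \<in> B'"
    and dims: "card B' * vec.dim (eigsp C 1) < card B * vec.dim (eigsp C (-1))"
  obtains f where "f \<noteq> 0" and "\<And>x. x \<notin> B \<Longrightarrow> f x = 0" and "\<And>x. C *v f x = - f x"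
    and "\<And>x. C *v shift_op S P f x = - shift_op S P f x"
proof -
  obtain E1 where E1: "E1 \<subseteq> eigsp C 1" "vec.independent E1" "eigsp C 1 \<subseteq> vec.span E1"
    and card_E1: "card E1 = vec.dim (eigsp C 1)"
    by (rule vec.basis_exists)
  obtain Em where Em: "Em \<subseteq> eigsp C (-1)" "vec.independent Em"
    and card_Em: "card Em = vec.dim (eigsp C (-1))"
    by (rule vec.basis_exists)
  have "finite E1" "finite Em"
    using E1 Em vec.finiteI_independent by auto
  define X where "X = delta_family B Em"
  define Y where "Y = delta_family B' E1"
  define L where "L g = shift_op S P g + ptw C (shift_op S P g)" for g :: "int^'d \<Rightarrow> complex^'n"
  have "finite X" "finite Y"
    unfolding X_def Y_def using assms(1,2) \<open>finite E1\<close> \<open>finite Em\<close> by (simp_all add: finite_delta_family)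
  have lin: "Vector_Spaces.linear scale_fun scale_fun L"
    unfolding L_def
    by (intro fun_vs_pair.linear_compose_add Vector_Spaces.linear_compose[OF linear_shift_op linear_ptw, unfolded o_def]
        linear_shift_op)
  have indep: "fun_vs.independent X"
    unfolding X_def using \<open>finite B\<close> Em(2) by (rule independent_delta_family)
  have image: "L ` X \<subseteq> fun_vs.span Y"
  proof
    fix h
    assume "h \<in> L ` X"
    then obtain y e where "y \<in> B" and h: "h = L (delta_at y e)"
      by (auto simp: X_def delta_family_def)
    have "L (delta_at y e) = (\<Sum>a\<in>S. delta_at (y + a) (P a *v e + C *v (P a *v e)))"
      by (simp add: L_def shift_op_delta_at ptw_delta_at fun_vs_pair.linear_sum[OF linear_ptw]
          delta_at_add sum.distrib)
    also have "\<dots> \<in> fun_vs.span Y"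
      unfolding Y_def using \<open>y \<in> B\<close> B_B' E1(3) add_mult_mem_eigsp_1[OF C2]
      by (intro fun_vs.span_sum delta_at_in_span_delta_family) auto
    finally show "h \<in> fun_vs.span Y"
      using h by simp
  qed
  have less: "card Y < card X"
  proof -
    have "card Y \<le> card B' * card E1"
      unfolding Y_def delta_family_def
      using card_image_le[of "B' \<times> E1"] \<open>finite B'\<close> \<open>finite E1\<close> by (simp add: card_cartesian_product)
    moreover have "card X = card B * card Em"
      unfolding X_def delta_family_def
      using Em(2) vec.dependent_zero by (subst card_image) (auto intro: inj_on_delta_at simp: card_cartesian_product)
    ultimately show ?thesis
      using dims card_E1 card_Em by simp
  qed
  obtain f where "f \<in> fun_vs.span X" "f \<noteq> 0" "L f = 0"
    using linear_nonzero_kernel_if_card_less[OF vector_space_scale_fun lin indep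
        \<open>finite X\<close> \<open>finite Y\<close> image less] by blast
  moreover have "f x \<in> eigsp C (-1)" and "x \<notin> B \<Longrightarrow> f x = 0" for x
    using span_delta_family_supported[OF subspace_eigsp Em(1) \<open>f \<in> fun_vs.span X\<close>[unfolded X_def]]
    by blast+
  moreover have "C *v shift_op S P f x = - shift_op S P f x" for x
    using fun_cong[OF \<open>L f = 0\<close>, of x] by (simp add: L_def ptw_def eq_neg_iff_add_eq_0 add.commute)
  ultimately show ?thesis
    by (intro that[of f]) (simp_all add: eigsp_def)
qed


lemma antiinvariant_finite_support_exists:
  fixes S :: "(int^'d) set" and P :: "int^'d \<Rightarrow> complex^'n^'n"
  assumes "finite S" and "C ** C = mat 1" and "vec.dim (eigsp C 1) < vec.dim (eigsp C (-1))"
  obtains f where "f \<noteq> 0" and "finite {x. f x \<noteq> 0}" and "\<And>x. C *v f x = - f x"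
    and "\<And>x. C *v shift_op S P f x = - shift_op S P f x"
proof -
  obtain R where "R \<ge> 0" and R: "\<And>a i. a \<in> S \<Longrightarrow> \<bar>a$i\<bar> \<le> R"
    using finite_int_vec_set_bounded[OF assms(1)] by blast
  obtain N :: nat where N: "(N + 2 * nat R) ^ CARD('d) * vec.dim (eigsp C 1)
      < N ^ CARD('d) * vec.dim (eigsp C (-1))"
    using ex_pow_add_mult_less[OF assms(3)] by blast
  define B :: "(int^'d) set" where "B = int_box 0 (int N)"
  define B' :: "(int^'d) set" where "B' = int_box (- R) (int N + R)"
  have "x + a \<in> B'" if "x \<in> B" and "a \<in> S" for x a
    using add_mem_int_box[OF that(1)[unfolded B_def] R[OF that(2)]] unfolding B'_def .
  moreover have "card B' * vec.dim (eigsp C 1) < card B * vec.dim (eigsp C (-1))"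
    using N \<open>R \<ge> 0\<close> unfolding B_def B'_def card_int_box
    by (simp add: nat_add_distrib nat_mult_distrib add.commute)
  moreover have "finite B" and "finite B'"
    by (simp_all add: B_def B'_def finite_int_box)
  ultimately obtain f where "f \<noteq> 0" "\<And>x. x \<notin> B \<Longrightarrow> f x = 0" "\<And>x. C *v f x = - f x"
    "\<And>x. C *v shift_op S P f x = - shift_op S P f x"
    using antiinvariant_supported_in[of B B' C S P] assms(2) by blast
  moreover have "finite {x. f x \<noteq> 0}"
    using \<open>\<And>x. x \<notin> B \<Longrightarrow> f x = 0\<close> finite_int_box[of 0 "int N"]
    unfolding B_def by (metis (mono_tags) finite_subset mem_Collect_eq subsetI)
  ultimately show ?thesis
    using that by blast
qed

lemma ell2_if_finite_support: "finite {x. f x \<noteq> 0} \<Longrightarrow> ell2 f"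
  unfolding ell2_def
  by (rule finite_nonzero_values_imp_summable_on, erule finite_subset[rotated]) auto


lemma finite_support_delta_expansion:
  assumes "finite F" and "\<And>x. x \<notin> F \<Longrightarrow> g x = 0"
  shows "g = (\<Sum>(y, i)\<in>F \<times> UNIV. scale_fun (g y $ i) (transl y (delta_tensor (axis i 1))))"
proof
  fix x
  have "(\<Sum>(y, i)\<in>F \<times> UNIV. scale_fun (g y $ i) (transl y (delta_tensor (axis i 1)))) x
      = (\<Sum>y\<in>F. \<Sum>i\<in>UNIV. (g y $ i) *s delta_at y (axis i 1) x)"
    by (simp add: sum_fun_apply transl_delta_tensor sum.cartesian_product case_prod_beta)
  also have "\<dots> = (\<Sum>y\<in>F. if x = y then (\<Sum>i\<in>UNIV. (g x $ i) *s axis i 1) else 0)"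
    by (intro sum.cong refl) (auto simp: delta_at_def)
  also have "\<dots> = g x"
    using assms by (auto simp: basis_expansion)
  finally show "g x = (\<Sum>(y, i)\<in>F \<times> UNIV. scale_fun (g y $ i) (transl y (delta_tensor (axis i 1)))) x"
    by simp
qed

lemma norm_vector_scale: "norm ((c::complex) *s (v::complex^'n)) = norm c * norm v"
  unfolding norm_vec_def by (simp add: norm_mult L2_set_right_distrib)

lemma sum_has_large_term:
  fixes w :: "'i \<Rightarrow> complex^'n"
  assumes "v = (\<Sum>p\<in>J. c p *s w p)" and "v \<noteq> 0"
  shows "\<exists>p\<in>J. norm v / ((\<Sum>p\<in>J. norm (c p)) + 1) \<le> norm (w p)"
proof (rule ccontr)
  define M where "M = (\<Sum>p\<in>J. norm (c p))"
  define \<delta> where "\<delta> = norm v / (M + 1)"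
  have "M \<ge> 0"
    unfolding M_def by (simp add: sum_nonneg)
  assume "\<not> ?thesis"
  then have small: "norm (w p) \<le> \<delta>" if "p \<in> J" for p
    using that unfolding M_def \<delta>_def by force
  have "norm v \<le> (\<Sum>p\<in>J. norm (c p) * norm (w p))"
    unfolding assms(1) by (rule order_trans[OF norm_sum]) (simp add: norm_vector_scale)
  also have "\<dots> \<le> M * \<delta>"
    unfolding M_def sum_distrib_right by (intro sum_mono mult_left_mono small) auto
  also have "\<dots> < (M + 1) * \<delta>"
    using assms(2) \<open>M \<ge> 0\<close> unfolding \<delta>_def by (simp add: distrib_right divide_strict_right_mono)
  also have "\<dots> = norm v"
    using \<open>M \<ge> 0\<close> unfolding \<delta>_def by simp
  finally show False
    by simp
qed

lemma limsup_square_pos_if_infinite: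
  fixes h :: "nat \<Rightarrow> real"
  assumes infinite: "infinite {n. c \<le> h n}" and "c > 0"
  shows "limsup (\<lambda>n. ereal ((h n)\<^sup>2)) > 0"
proof -
  define r where "r = enumerate {n. c \<le> h n}"
  have r: "strict_mono r"
    unfolding r_def using infinite by (rule strict_mono_enumerate)
  have "c \<le> h (r k)" for k
    using enumerate_in_set[OF infinite] unfolding r_def by auto
  then have "c\<^sup>2 \<le> (h (r k))\<^sup>2" for k
    using \<open>c > 0\<close> by (simp add: power_mono)
  then have "ereal (c\<^sup>2) \<le> limsup ((\<lambda>n. ereal ((h n)\<^sup>2)) \<circ> r)"
    by (intro le_Limsup) auto
  also have "\<dots> \<le> limsup (\<lambda>n. ereal ((h n)\<^sup>2))"
    by (rule limsup_subseq_mono[OF r])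
  finally show ?thesis
    using \<open>c > 0\<close> by (meson ereal_less(2) order_less_le_trans zero_less_power)
qed

lemma fixed_point_orbit_not_vanishing:
  fixes T :: "(int^'d \<Rightarrow> complex^'n) \<Rightarrow> (int^'d \<Rightarrow> complex^'n)"
  assumes lin: "Vector_Spaces.linear scale_fun scale_fun T"
    and transl_T: "\<And>b g. transl b (T g) = T (transl b g)"
    and fixed: "T f = f" and "f \<noteq> 0" and fin: "finite {x. f x \<noteq> 0}"
  shows "\<exists>\<phi> xo. \<phi> \<noteq> 0 \<and> limsup (\<lambda>n. ereal ((norm ((T ^^ n) (delta_tensor \<phi>) xo))\<^sup>2)) > 0"
proof -
  obtain x0 where "f x0 \<noteq> 0"
    using \<open>f \<noteq> 0\<close> by (auto simp: fun_eq_iff)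
  define J where "J = {x. f x \<noteq> 0} \<times> (UNIV :: 'n set)"
  define w where "w n = (\<lambda>(y, i). (T ^^ n) (delta_tensor (axis i 1)) (x0 - y))" for n
  define c where "c = (\<lambda>(y, i). f y $ i)"
  define \<delta> where "\<delta> = norm (f x0) / ((\<Sum>p\<in>J. norm (c p)) + 1)"
  have "finite J"
    unfolding J_def using fin by simp
  have transl_Tn: "transl b ((T ^^ n) g) = (T ^^ n) (transl b g)" for b g n
    by (induction n arbitrary: g) (simp_all add: transl_T)
  have "f x0 = (\<Sum>p\<in>J. c p *s w n p)" for n
  proof -
    have "f = (T ^^ n) f"
      by (induction n) (simp_all add: fixed)
    also have "\<dots> = (\<Sum>(y, i)\<in>J. scale_fun (f y $ i) (transl y ((T ^^ n) (delta_tensor (axis i 1)))))"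
      unfolding J_def
      by (subst finite_support_delta_expansion[OF fin])
        (simp_all add: fun_vs_pair.linear_sum[OF linear_funpow[OF lin]]
          fun_vs_pair.linear_scale[OF linear_funpow[OF lin]]
          case_prod_beta transl_Tn)
    finally have "f x0 = (\<Sum>(y, i)\<in>J. scale_fun (f y $ i) (transl y ((T ^^ n) (delta_tensor (axis i 1))))) x0"
      by (rule fun_cong)
    then show ?thesis
      by (simp add: sum_fun_apply case_prod_beta c_def w_def transl_def)
  qed
  then have "\<forall>n. \<exists>p\<in>J. \<delta> \<le> norm (w n p)"
    unfolding \<delta>_def using sum_has_large_term \<open>f x0 \<noteq> 0\<close> by blast
  then obtain p where "p \<in> J" and "infinite {n. \<delta> \<le> norm (w n p)}"
    using pigeonhole_infinite_rel[OF infinite_UNIV_nat \<open>finite J\<close>, of "\<lambda>n p. \<delta> \<le> norm (w n p)"]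
    by auto
  moreover have "\<delta> > 0"
    unfolding \<delta>_def using \<open>f x0 \<noteq> 0\<close> by (simp add: add_nonneg_pos sum_nonneg)
  ultimately have "limsup (\<lambda>n. ereal ((norm (w n p))\<^sup>2)) > 0"
    by (intro limsup_square_pos_if_infinite)
  then show ?thesis
    by (intro exI[of _ "axis (snd p) 1"] exI[of _ "x0 - fst p"])
      (simp add: w_def case_prod_beta axis_eq_0_iff)
qed

theorem theorem5p1:
  fixes S :: "(int^'d) set"
    and P :: "int^'d \<Rightarrow> complex^'n^'n"
    and C :: "complex^'n^'n"
  assumes "finite S"
    and "resolution_of_unity S P"
    and "unitary_mat C"
    and "C ** C = mat 1"
    and "\<forall>c. C \<noteq> mat c"
    and "vec.dim (eigsp C 1) < vec.dim (eigsp C (-1))"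
  shows "has_eigenvalue_l2 (U_op S P C) 1 \<and>
    (\<exists>\<phi>::complex^'n. \<exists>xo::int^'d. \<phi> \<noteq> 0 \<and>
       limsup (\<lambda>n. ereal ((norm (((U_op S P C) ^^ n) (delta_tensor \<phi>) xo))\<^sup>2)) > 0)"
proof -
  obtain f :: "int^'d \<Rightarrow> complex^'n" where "f \<noteq> 0" and fin: "finite {x. f x \<noteq> 0}"
    and "\<And>x. C *v f x = - f x" and "\<And>x. C *v shift_op S P f x = - shift_op S P f x"
    using antiinvariant_finite_support_exists[OF assms(1,4,6)] by metis
  then have fixed: "U_op S P C f = f"
    by (intro U_op_fixes_antiinvariant[OF assms(1,2)])
  have "has_eigenvalue_l2 (U_op S P C) 1"
    unfolding has_eigenvalue_l2_def
    using ell2_if_finite_support[OF fin] \<open>f \<noteq> 0\<close> fixed by (auto simp: zero_fun_def)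
  then show ?thesis
    using fixed_point_orbit_not_vanishing[OF linear_U_op transl_U_op fixed \<open>f \<noteq> 0\<close> fin] by blast
qed

end
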